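(* Fix $k\ge1$. Under the mean-field and homogeneity assumptions, the activation rate of the $k$ key nodes, \[ m_k(t)=\lim_{\Delta\downarrow0}\frac1\Delta\,\mathbb P\{\tau_k\le t+\Delta\mid\tau_k\ge t\}, \] satisfies \[ m_k(t)\approx\lambda(\hat a(t))\,\frac{p_{k-1}(t)}{1-p_k(t)}, \] where $p_j(t)$, $0\le j\le k$, is the probability that the time-inhomogeneous Markov chain on $\{0,\dots,k\}$ started at $0$, with jump rates $i\to i+1$ equal to $(k-i)\lambda(\hat a(t))$ ($0\le i\le k-1$) and $i\to i-1$ equal to $i\mu(\hat a(t))$ ($1\le i\le k-1$), state $k$ absorbing, is in state $j$ at time $t$ (equivalently, the solution of the corresponding Kolmogorov forward equations with $p_0(0)=1$, $p_1(0)=\dots=p_k(0)=0$).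
   Context: A signal network has $n$ aggregated nodes with state $\mathbf X(t)\in\{0,1\}^n$ (1 = active, 0 = passive), all passive at time $0$; nodes $1,\dots,k$ are key nodes, and $\tau_k=\inf\{t\ge0:X_1(t)=\dots=X_k(t)=1\}$. Node $i$ becomes active at rate $\lambda(a_i(t))$ and passive at rate $\mu(a_i(t))$, where $a_i(t)$ is the fraction of active neighbours of $i$, $\lambda$ decreasing and $\mu$ increasing; $\hat a(t)$ is the expected fraction of active nodes at time $t$. Mean-field assumption: all rates replaced by $\lambda(\hat a(t))$ and $\mu(\hat a(t))$. Homogeneity assumption: the sets $S_i=\{z\in\{0,1\}^n:\#\{1\le j\le k:z_j=1\}=i\}$ are aggregated into $k+1$ states of a Markov chain with rates $i\to i+1$: $(k-i)\lambda(\hat a(t))$, $i\to i-1$: $i\mu(\hat a(t))$. $\approx$ denotes equality under these assumptions. *)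

theory Defs
  imports "HOL-Probability.Probability"
begin

definition up_rate :: "nat \<Rightarrow> real \<Rightarrow> nat \<Rightarrow> real" where
  "up_rate k l i = (if i < k then real (k - i) * l else 0)"

definition down_rate :: "nat \<Rightarrow> real \<Rightarrow> nat \<Rightarrow> real" where
  "down_rate k m i = (if 1 \<le> i \<and> i < k then real i * m else 0)"

definition forward_rhs ::
  "nat \<Rightarrow> real \<Rightarrow> real \<Rightarrow> (nat \<Rightarrow> real) \<Rightarrow> nat \<Rightarrow> real" where
  "forward_rhs k l m q j =
     (if 1 \<le> j then up_rate k l (j - 1) * q (j - 1) else 0)
   + (if j + 1 \<le> k then down_rate k m (j + 1) * q (j + 1) else 0)
   - (up_rate k l j + down_rate k m j) * q j"

definition kolmogorov_forward_solution ::
  "nat \<Rightarrow> (real \<Rightarrow> real) \<Rightarrow> (real \<Rightarrow> real) \<Rightarrow> (nat \<Rightarrow> real \<Rightarrow> real) \<Rightarrow> bool" where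
  "kolmogorov_forward_solution k L M p \<longleftrightarrow>
     p 0 0 = 1 \<and> (\<forall>j\<in>{1..k}. p j 0 = 0) \<and>
     (\<forall>j\<le>k. \<forall>t\<ge>0. (p j has_real_derivative
         forward_rhs k (L t) (M t) (\<lambda>i. p i t) j) (at t within {0..}))"

text \<open>Hitting time of state k (value \<infinity> if never hit).\<close>

definition hitting_time :: "nat \<Rightarrow> (real \<Rightarrow> nat) \<Rightarrow> ereal" where
  "hitting_time k x = Inf (ereal ` {s. 0 \<le> s \<and> x s = k})"

end

theory Submission
  imports Defs
begin

text \<open>
  Since state \<open>k\<close> is absorbing and paths are right-continuous, \<open>\<tau>\<^sub>k \<le> s\<close> holds exactly
  when \<open>X(s) = k\<close>; hence \<open>P(\<tau>\<^sub>k \<le> s) = p\<^sub>k(s)\<close>, and \<open>P(\<tau>\<^sub>k < t) = p\<^sub>k(t)\<close> by left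
  continuity of \<open>p\<^sub>k\<close>. The conditional activation rate is thus the hazard rate
  \<open>p\<^sub>k'(t) / (1 - p\<^sub>k(t))\<close> of \<open>\<tau>\<^sub>k\<close>, and the forward equation of the absorbing state is
  \<open>p\<^sub>k' = lam(ahat) p\<^sub>k\<^sub>-\<^sub>1\<close>.
\<close>

lemma hitting_time_nonneg: "0 \<le> hitting_time k x"
  unfolding hitting_time_def by (auto intro!: Inf_greatest)

lemma hitting_time_le_iff:
  assumes absorb: "\<And>r u. 0 \<le> r \<Longrightarrow> r \<le> u \<Longrightarrow> x r = k \<Longrightarrow> x u = k"
    and right_const: "eventually (\<lambda>u. x u = x s) (at_right s)"
    and s: "0 \<le> s"
  shows "hitting_time k x \<le> ereal s \<longleftrightarrow> x s = k"
proof
  assume "x s = k"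
  then show "hitting_time k x \<le> ereal s"
    unfolding hitting_time_def using s by (auto intro!: Inf_lower)
next
  assume le: "hitting_time k x \<le> ereal s"
  show "x s = k"
  proof (rule ccontr)
    assume ne: "x s \<noteq> k"
    from right_const obtain b where "s < b" and const: "\<And>u. s < u \<Longrightarrow> u < b \<Longrightarrow> x u = x s"
      unfolding eventually_at_right_field by auto
    have "ereal b \<le> hitting_time k x"
      unfolding hitting_time_def
    proof (rule Inf_greatest)
      fix y assume "y \<in> ereal ` {r. 0 \<le> r \<and> x r = k}"
      then obtain r where "y = ereal r" "0 \<le> r" "x r = k" by auto
      with absorb[of r s] const[of r] ne show "ereal b \<le> y"
        by force
    qed
    with le \<open>s < b\<close> show False
      by (metis ereal_less_eq(3) leD order_trans)
  qed
qed

lemma hitting_time_le_set_eq: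
  assumes absorb: "\<And>\<omega> r u. \<omega> \<in> \<Omega> \<Longrightarrow> 0 \<le> r \<Longrightarrow> r \<le> u \<Longrightarrow> X \<omega> r = k \<Longrightarrow> X \<omega> u = k"
    and right_const: "\<And>\<omega> s. \<omega> \<in> \<Omega> \<Longrightarrow> 0 \<le> s \<Longrightarrow> eventually (\<lambda>u. X \<omega> u = X \<omega> s) (at_right s)"
  shows "{\<omega> \<in> \<Omega>. hitting_time k (X \<omega>) \<le> ereal s} =
           (if 0 \<le> s then {\<omega> \<in> \<Omega>. X \<omega> s = k} else {})"
proof (cases "0 \<le> s")
  case True
  have "hitting_time k (X \<omega>) \<le> ereal s \<longleftrightarrow> X \<omega> s = k" if "\<omega> \<in> \<Omega>" for \<omega>
    using absorb[OF that] right_const[OF that True] True by (rule hitting_time_le_iff)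
  with True show ?thesis by auto
next
  case False
  then have "ereal s < 0" by simp
  then have "\<not> hitting_time k (X \<omega>) \<le> ereal s" for \<omega>
    using hitting_time_nonneg[of k "X \<omega>"] by (meson less_le_trans not_le)
  with False show ?thesis by auto
qed

lemma Union_le_ereal_eq_less:
  fixes \<tau> :: "'a \<Rightarrow> ereal" and S :: "nat \<Rightarrow> real"
  assumes lim: "S \<longlonglongrightarrow> t" and below: "\<And>n. S n < t"
  shows "(\<Union>n. {\<omega> \<in> \<Omega>. \<tau> \<omega> \<le> ereal (S n)}) = {\<omega> \<in> \<Omega>. \<tau> \<omega> < ereal t}"
proof (intro equalityI subsetI)
  fix \<omega> assume "\<omega> \<in> (\<Union>n. {\<omega> \<in> \<Omega>. \<tau> \<omega> \<le> ereal (S n)})"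
  then obtain n where "\<omega> \<in> \<Omega>" "\<tau> \<omega> \<le> ereal (S n)" by auto
  with le_less_trans[of "\<tau> \<omega>" "ereal (S n)" "ereal t"] below[of n]
  show "\<omega> \<in> {\<omega> \<in> \<Omega>. \<tau> \<omega> < ereal t}"
    by simp
next
  fix \<omega> assume "\<omega> \<in> {\<omega> \<in> \<Omega>. \<tau> \<omega> < ereal t}"
  then obtain r where \<omega>: "\<omega> \<in> \<Omega>" "\<tau> \<omega> < ereal r" "r < t"
    using ereal_dense2 by fastforce
  obtain n where "r < S n"
    using eventually_happens'[OF sequentially_bot order_tendstoD(1)[OF lim \<open>r < t\<close>]] by blast
  with \<omega> have "\<tau> \<omega> \<le> ereal (S n)"
    by (meson less_ereal.simps(1) less_imp_le order.strict_trans)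
  with \<omega> show "\<omega> \<in> (\<Union>n. {\<omega> \<in> \<Omega>. \<tau> \<omega> \<le> ereal (S n)})"
    by auto
qed

lemma sets_less_ereal:
  assumes "\<And>s. {\<omega> \<in> space M. \<tau> \<omega> \<le> ereal s} \<in> sets M"
  shows "{\<omega> \<in> space M. \<tau> \<omega> < ereal t} \<in> sets M"
proof -
  have "{\<omega> \<in> space M. \<tau> \<omega> < ereal t} = (\<Union>n. {\<omega> \<in> space M. \<tau> \<omega> \<le> ereal (t + - inverse (Suc n))})"
    by (rule Union_le_ereal_eq_less[symmetric, OF LIMSEQ_inverse_real_of_nat_add_minus]) simp
  with assms show ?thesis by auto
qed

lemma (in finite_measure) tendsto_measure_le_ereal_at_left:
  assumes sets_le: "\<And>s. {\<omega> \<in> space M. \<tau> \<omega> \<le> ereal s} \<in> sets M"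
  shows "((\<lambda>s. measure M {\<omega> \<in> space M. \<tau> \<omega> \<le> ereal s})
           \<longlongrightarrow> measure M {\<omega> \<in> space M. \<tau> \<omega> < ereal t}) (at_left t)"
proof (rule tendsto_at_left_sequentially[of "t - 1"])
  fix S :: "nat \<Rightarrow> real" assume below: "\<And>n. S n < t" and "incseq S" and lim: "S \<longlonglongrightarrow> t"
  have "incseq (\<lambda>n. {\<omega> \<in> space M. \<tau> \<omega> \<le> ereal (S n)})"
    using \<open>incseq S\<close> by (auto simp: incseq_def elim!: order.trans)
  with sets_le have "(\<lambda>n. measure M {\<omega> \<in> space M. \<tau> \<omega> \<le> ereal (S n)})
      \<longlonglongrightarrow> measure M (\<Union>n. {\<omega> \<in> space M. \<tau> \<omega> \<le> ereal (S n)})"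
    by (intro finite_Lim_measure_incseq) auto
  then show "(\<lambda>n. measure M {\<omega> \<in> space M. \<tau> \<omega> \<le> ereal (S n)})
               \<longlonglongrightarrow> measure M {\<omega> \<in> space M. \<tau> \<omega> < ereal t}"
    by (simp only: Union_le_ereal_eq_less[OF lim below])
qed simp

lemma tendsto_zero_extension_at_left:
  fixes f :: "real \<Rightarrow> real"
  assumes cont: "continuous (at t within {0..}) f" and "0 \<le> t" and "f 0 = 0"
  shows "((\<lambda>s. if 0 \<le> s then f s else 0) \<longlongrightarrow> f t) (at_left t)"
proof (cases "t = 0")
  case True
  have "eventually (\<lambda>s. (if 0 \<le> s then f s else 0) = 0) (at_left (0::real))"
    using eventually_at_left_real[of "-1" 0] by (simp add: eventually_mono)
  with True \<open>f 0 = 0\<close> show ?thesis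
    by (simp add: tendsto_eventually)
next
  case False
  with \<open>0 \<le> t\<close> have "0 < t" by simp
  from cont have "(f \<longlongrightarrow> f t) (at t within {0..t})"
    by (auto simp: continuous_within intro: tendsto_within_subset)
  then have "(f \<longlongrightarrow> f t) (at_left t)"
    by (simp add: at_within_Icc_at_left[OF \<open>0 < t\<close>])
  then show ?thesis
    by (rule Lim_transform_eventually)
      (use eventually_at_left_real[OF \<open>0 < t\<close>] in \<open>rule eventually_mono, simp\<close>)
qed

lemma tendsto_right_difference_quotient:
  fixes f :: "real \<Rightarrow> real"
  assumes "(f has_real_derivative D) (at_right t)"
  shows "((\<lambda>h. (f (t + h) - f t) / h) \<longlongrightarrow> D) (at_right 0)"
proof -
  from assms have "((\<lambda>y. (f y - f t) / (y - t)) \<longlongrightarrow> D) (at_right t)"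
    unfolding has_field_derivative_iff .
  then show ?thesis
    unfolding filterlim_at_right_to_0[of _ _ t] by (simp add: add.commute)
qed

lemma (in prob_space) hazard_rate_tendsto:
  fixes \<tau> :: "'a \<Rightarrow> ereal" and F :: "real \<Rightarrow> real"
  assumes sets_le: "\<And>s. {\<omega> \<in> space M. \<tau> \<omega> \<le> ereal s} \<in> sets M"
    and cdf: "\<And>s. measure M {\<omega> \<in> space M. \<tau> \<omega> \<le> ereal s} = (if 0 \<le> s then F s else 0)"
    and deriv: "(F has_real_derivative D) (at t within {0..})"
    and "F 0 = 0" and "0 \<le> t" and "F t < 1"
  shows "((\<lambda>\<Delta>. (1 / \<Delta>) *
            (measure M {\<omega> \<in> space M. \<tau> \<omega> \<le> ereal (t + \<Delta>) \<and> \<tau> \<omega> \<ge> ereal t}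
             / measure M {\<omega> \<in> space M. \<tau> \<omega> \<ge> ereal t}))
          \<longlongrightarrow> D / (1 - F t)) (at_right 0)"
proof -
  let ?before = "{\<omega> \<in> space M. \<tau> \<omega> < ereal t}"
  have sets_before: "?before \<in> sets M"
    using sets_le by (rule sets_less_ereal)
  have "((\<lambda>s. if 0 \<le> s then F s else 0) \<longlongrightarrow> F t) (at_left t)"
    using DERIV_continuous[OF deriv] \<open>0 \<le> t\<close> \<open>F 0 = 0\<close> by (rule tendsto_zero_extension_at_left)
  with tendsto_measure_le_ereal_at_left[OF sets_le, of t] have measure_before: "measure M ?before = F t"
    by (simp add: cdf tendsto_unique[OF trivial_limit_at_left_real])
  have "{\<omega> \<in> space M. \<tau> \<omega> \<ge> ereal t} = space M - ?before"
    by auto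
  then have survival: "measure M {\<omega> \<in> space M. \<tau> \<omega> \<ge> ereal t} = 1 - F t"
    using prob_compl[OF sets_before] measure_before by simp
  have window: "measure M {\<omega> \<in> space M. \<tau> \<omega> \<le> ereal (t + \<Delta>) \<and> \<tau> \<omega> \<ge> ereal t}
      = F (t + \<Delta>) - F t" if "0 < \<Delta>" for \<Delta>
  proof -
    have "{\<omega> \<in> space M. \<tau> \<omega> \<le> ereal (t + \<Delta>) \<and> \<tau> \<omega> \<ge> ereal t}
        = {\<omega> \<in> space M. \<tau> \<omega> \<le> ereal (t + \<Delta>)} - ?before"
      by auto
    moreover have "?before \<subseteq> {\<omega> \<in> space M. \<tau> \<omega> \<le> ereal (t + \<Delta>)}"
      using that by (force intro: less_imp_le order.strict_trans[of _ "ereal t"])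
    ultimately show ?thesis
      using finite_measure_Diff[OF sets_le sets_before] measure_before cdf that \<open>0 \<le> t\<close> by simp
  qed
  have "(F has_real_derivative D) (at_right t)"
    using deriv by (rule DERIV_subset) (use \<open>0 \<le> t\<close> in auto)
  then have "((\<lambda>\<Delta>. (F (t + \<Delta>) - F t) / \<Delta> / (1 - F t)) \<longlongrightarrow> D / (1 - F t)) (at_right 0)"
    using \<open>F t < 1\<close> by (intro tendsto_divide tendsto_right_difference_quotient tendsto_const) auto
  then show ?thesis
    by (rule Lim_transform_eventually)
      (use eventually_at_right_less[of "0::real"] in \<open>rule eventually_mono, simp add: window survival\<close>)
qed

lemma forward_rhs_absorbing: "1 \<le> k \<Longrightarrow> forward_rhs k l m q k = l * q (k - 1)"
  unfolding forward_rhs_def up_rate_def down_rate_def by simp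

lemma kolmogorov_forward_solution_absorbing_deriv:
  assumes "kolmogorov_forward_solution k L M p" and "1 \<le> k" and "0 \<le> t"
  shows "(p k has_real_derivative L t * p (k - 1) t) (at t within {0..})"
  using assms forward_rhs_absorbing[of k] unfolding kolmogorov_forward_solution_def by auto

theorem theorem2:
  fixes k :: nat
    and lam mu ahat :: "real \<Rightarrow> real"
    and p :: "nat \<Rightarrow> real \<Rightarrow> real"
    and M :: "'w measure"
    and X :: "'w \<Rightarrow> real \<Rightarrow> nat"
    and t :: real
  assumes k: "k \<ge> 1"
    and lam_nonneg: "\<And>a. 0 \<le> a \<Longrightarrow> a \<le> 1 \<Longrightarrow> 0 \<le> lam a"
    and mu_nonneg: "\<And>a. 0 \<le> a \<Longrightarrow> a \<le> 1 \<Longrightarrow> 0 \<le> mu a"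
    and lam_decr: "\<And>a b. 0 \<le> a \<Longrightarrow> a \<le> b \<Longrightarrow> b \<le> 1 \<Longrightarrow> lam b \<le> lam a"
    and mu_incr: "\<And>a b. 0 \<le> a \<Longrightarrow> a \<le> b \<Longrightarrow> b \<le> 1 \<Longrightarrow> mu a \<le> mu b"
    and ahat_range: "\<And>s. 0 \<le> s \<Longrightarrow> 0 \<le> ahat s \<and> ahat s \<le> 1"
    and forward: "kolmogorov_forward_solution k (\<lambda>s. lam (ahat s)) (\<lambda>s. mu (ahat s)) p"
    and prob: "prob_space M"
    and X_range: "\<And>\<omega> s. \<omega> \<in> space M \<Longrightarrow> 0 \<le> s \<Longrightarrow> X \<omega> s \<le> k"
    and X_meas: "\<And>s j. 0 \<le> s \<Longrightarrow> {\<omega> \<in> space M. X \<omega> s = j} \<in> sets M"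
    and X_marginal: "\<And>s j. 0 \<le> s \<Longrightarrow> j \<le> k \<Longrightarrow>
                        measure M {\<omega> \<in> space M. X \<omega> s = j} = p j s"
    and X_absorb: "\<And>\<omega> s u. \<omega> \<in> space M \<Longrightarrow> 0 \<le> s \<Longrightarrow> s \<le> u \<Longrightarrow>
                        X \<omega> s = k \<Longrightarrow> X \<omega> u = k"
    and X_rcont: "\<And>\<omega> s. \<omega> \<in> space M \<Longrightarrow> 0 \<le> s \<Longrightarrow>
                        eventually (\<lambda>u. X \<omega> u = X \<omega> s) (at_right s)"
    and t: "0 \<le> t"
    and not_absorbed: "p k t < 1"
  shows "((\<lambda>\<Delta>. (1 / \<Delta>) *
            (measure M {\<omega> \<in> space M. hitting_time k (X \<omega>) \<le> ereal (t + \<Delta>)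
                                    \<and> hitting_time k (X \<omega>) \<ge> ereal t}
             / measure M {\<omega> \<in> space M. hitting_time k (X \<omega>) \<ge> ereal t}))
          \<longlongrightarrow> lam (ahat t) * p (k - 1) t / (1 - p k t)) (at_right 0)"
proof -
  interpret prob_space M by (rule prob)
  have hit_le: "{\<omega> \<in> space M. hitting_time k (X \<omega>) \<le> ereal s} =
                  (if 0 \<le> s then {\<omega> \<in> space M. X \<omega> s = k} else {})" for s
    using X_absorb X_rcont by (rule hitting_time_le_set_eq)
  show ?thesis
  proof (rule hazard_rate_tendsto[where \<tau> = "\<lambda>\<omega>. hitting_time k (X \<omega>)" and F = "p k"])
    show "{\<omega> \<in> space M. hitting_time k (X \<omega>) \<le> ereal s} \<in> sets M" for s
      using X_meas by (simp add: hit_le)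
    show "measure M {\<omega> \<in> space M. hitting_time k (X \<omega>) \<le> ereal s} = (if 0 \<le> s then p k s else 0)" for s
      using X_marginal by (simp add: hit_le)
    show "(p k has_real_derivative lam (ahat t) * p (k - 1) t) (at t within {0..})"
      using forward k t by (rule kolmogorov_forward_solution_absorbing_deriv)
    show "p k 0 = 0"
      using forward k unfolding kolmogorov_forward_solution_def by auto
  qed (use t not_absorbed in auto)
qed

end
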